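(* Let $N\ge2$. The matrix $D^\ddagger$ is invertible, and its inverse $E=(D^\ddagger)^{-1}$ is given by $$E_{ij}=\omega_NM_j(1)+\int_1^{\tau_i}M_j(\tau)\,d\tau\quad(1\le i<N,\ 1\le j<N),$$ $$E_{iN}=-\omega_N\quad(1\le i\le N),\qquad E_{Nj}=\omega_NM_j(1)\quad(1\le j<N),$$ where $M_j(\tau)=\prod_{i=1,i\ne j}^{N-1}\frac{\tau-\tau_i}{\tau_j-\tau_i}$, $1\le j\le N-1$, is the Lagrange basis for the points $\tau_1,\dots,\tau_{N-1}$.
   Context: Let $-1<\tau_1<\dots<\tau_N=1$ and $\omega_1,\dots,\omega_N>0$ be the nodes and weights of the $N$-point Gauss–Radau quadrature rule on $[-1,1]$ with fixed node $+1$ (exact for polynomials of degree $\le 2N-2$). Set $\tau_0=-1$. For $0\le j\le N$ let $L_j(\tau)=\prod_{i=0,i\ne j}^{N}\frac{\tau-\tau_i}{\tau_j-\tau_i}$ and let $D$ be the $N\times(N+1)$ matrix $D_{ij}=L_j'(\tau_i)$, $1\le i\le N$, $0\le j\le N$. Let $D^\ddagger$ be the $N\times N$ matrix $D^\ddagger_{ij}=-(\omega_j/\omega_i)D_{ji}$, $1\le i,j\le N$. *)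

theory Defs
  imports "HOL-Analysis.Analysis" "HOL-Computational_Algebra.Polynomial" "Jordan_Normal_Form.Matrix"
begin

definition lagrange_basis :: "(nat \<Rightarrow> real) \<Rightarrow> nat set \<Rightarrow> nat \<Rightarrow> real \<Rightarrow> real" where
  "lagrange_basis x I j t = (\<Prod>i\<in>I - {j}. (t - x i) / (x j - x i))"

definition gauss_radau :: "nat \<Rightarrow> (nat \<Rightarrow> real) \<Rightarrow> (nat \<Rightarrow> real) \<Rightarrow> bool" where
  "gauss_radau N \<tau> \<omega> \<longleftrightarrow>
     -1 < \<tau> 1 \<and> (\<forall>i j. 1 \<le> i \<longrightarrow> i < j \<longrightarrow> j \<le> N \<longrightarrow> \<tau> i < \<tau> j) \<and> \<tau> N = 1 \<and>
     (\<forall>i. 1 \<le> i \<longrightarrow> i \<le> N \<longrightarrow> 0 < \<omega> i) \<and>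
     (\<forall>p :: real poly. degree p \<le> 2 * N - 2 \<longrightarrow>
        integral {-1..1} (\<lambda>t. poly p t) = (\<Sum>i = 1..N. \<omega> i * poly p (\<tau> i)))"

definition ext_nodes :: "(nat \<Rightarrow> real) \<Rightarrow> nat \<Rightarrow> real" where
  "ext_nodes \<tau> j = (if j = 0 then -1 else \<tau> j)"

definition diff_mat :: "nat \<Rightarrow> (nat \<Rightarrow> real) \<Rightarrow> nat \<Rightarrow> nat \<Rightarrow> real" where
  "diff_mat N \<tau> i j = deriv (lagrange_basis (ext_nodes \<tau>) {0..N} j) (ext_nodes \<tau> i)"

text \<open>D-double-dagger as an N x N matrix (0-based: entry (i,j) is the paper's (i+1,j+1)).\<close>
definition ddag_mat :: "nat \<Rightarrow> (nat \<Rightarrow> real) \<Rightarrow> (nat \<Rightarrow> real) \<Rightarrow> real mat" where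
  "ddag_mat N \<tau> \<omega> = mat N N (\<lambda>(i, j). - (\<omega> (j+1) / \<omega> (i+1)) * diff_mat N \<tau> (j+1) (i+1))"

definition M_basis :: "nat \<Rightarrow> (nat \<Rightarrow> real) \<Rightarrow> nat \<Rightarrow> real \<Rightarrow> real" where
  "M_basis N \<tau> j = lagrange_basis \<tau> {1..N-1} j"

text \<open>Claimed inverse E (0-based). The integral from 1 to tau_i (tau_i <= 1) is
  written as minus the integral over [tau_i, 1].\<close>
definition E_mat :: "nat \<Rightarrow> (nat \<Rightarrow> real) \<Rightarrow> (nat \<Rightarrow> real) \<Rightarrow> real mat" where
  "E_mat N \<tau> \<omega> = mat N N (\<lambda>(i, j).
     if j = N - 1 then - \<omega> N
     else if i = N - 1 then \<omega> N * M_basis N \<tau> (j+1) 1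
     else \<omega> N * M_basis N \<tau> (j+1) 1 - integral {\<tau> (i+1)..1} (M_basis N \<tau> (j+1)))"

end

theory Submission
  imports Defs "Jordan_Normal_Form.Determinant"
begin

text \<open>For a polynomial \<open>W\<close> of degree below \<open>N\<close>, applying \<open>D\<^sup>\<ddagger>\<close> to the samples \<open>W(\<tau>\<^sub>k)\<close>
  gives \<open>W'(\<tau>\<^sub>i) - [i = N] W(1) / \<omega>\<^sub>N\<close>: this is summation by parts, because the Gauss-Radau
  rule integrates \<open>(L\<^sub>i W)'\<close> exactly. Column \<open>j < N\<close> of \<open>E\<close> samples the antiderivative
  \<open>W\<close> of \<open>M\<^sub>j\<close> with \<open>W(1) = \<omega>\<^sub>N M\<^sub>j(1)\<close>, and column \<open>N\<close> the constant \<open>-\<omega>\<^sub>N\<close>; in both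
  cases the formula produces the corresponding unit vector, so \<open>D\<^sup>\<ddagger> E = I\<close>.\<close>

definition lagrange_poly :: "('a \<Rightarrow> 'b::field) \<Rightarrow> 'a set \<Rightarrow> 'a \<Rightarrow> 'b poly" where
  "lagrange_poly x I j = (\<Prod>i\<in>I - {j}. Polynomial.smult (inverse (x j - x i)) [:- x i, 1:])"

lemma poly_lagrange_poly: "poly (lagrange_poly x I j) t = lagrange_basis x I j t"
  unfolding lagrange_poly_def lagrange_basis_def poly_prod
  by (rule prod.cong) (auto simp: divide_inverse algebra_simps)

lemma lagrange_basis_eq_poly: "lagrange_basis x I j = poly (lagrange_poly x I j)"
  by (simp add: poly_lagrange_poly fun_eq_iff)

lemma degree_lagrange_poly_le:
  assumes "finite I"
  shows "degree (lagrange_poly x I j) \<le> card (I - {j})"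
proof -
  have "degree (lagrange_poly x I j)
      \<le> sum (degree \<circ> (\<lambda>i. Polynomial.smult (inverse (x j - x i)) [:- x i, 1:])) (I - {j})"
    unfolding lagrange_poly_def by (rule degree_prod_sum_le) (use assms in auto)
  also have "\<dots> \<le> (\<Sum>i\<in>I - {j}. 1)"
    by (rule sum_mono) auto
  finally show ?thesis by simp
qed

lemma lagrange_basis_at_node:
  assumes "finite I" "inj_on x I" "j \<in> I" "k \<in> I"
  shows "lagrange_basis x I j (x k) = (if k = j then 1 else 0)"
proof (cases "k = j")
  case True
  have "x j \<noteq> x i" if "i \<in> I" "i \<noteq> j" for i
    using that assms(2,3) by (auto dest: inj_onD)
  then show ?thesis
    using True unfolding lagrange_basis_def by (simp add: prod.neutral)
next
  case False
  then show ?thesis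
    unfolding lagrange_basis_def using assms(1,4) by (auto intro: prod_zero)
qed

lemma deriv_lagrange_basis: "deriv (lagrange_basis x I j) t = poly (pderiv (lagrange_poly x I j)) t"
  unfolding lagrange_basis_eq_poly by (rule DERIV_imp_deriv) simp

lemma integral_poly_pderiv:
  fixes a b :: real
  assumes "a \<le> b"
  shows "integral {a..b} (poly (pderiv p)) = poly p b - poly p a"
  by (rule integral_unique, rule fundamental_theorem_of_calculus)
     (use assms in \<open>auto intro: DERIV_subset poly_DERIV
        simp: has_real_derivative_iff_has_vector_derivative[symmetric]\<close>)

lemma poly_antiderivative_exists:
  fixes p :: "'a::field_char_0 poly"
  shows "\<exists>W. pderiv W = p \<and> poly W a = c"
proof -
  define V where "V = (\<Sum>i\<le>degree p. monom (coeff p i / of_nat (Suc i)) (Suc i))"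
  have "pderiv V = (\<Sum>i\<le>degree p. monom (coeff p i) i)"
    unfolding V_def by (simp add: higher_pderiv_sum[where n = 1, simplified] pderiv_monom del: of_nat_Suc)
  then have "pderiv V = p"
    by (simp add: poly_as_sum_of_monoms)
  then have "pderiv (V + [:c - poly V a:]) = p \<and> poly (V + [:c - poly V a:]) a = c"
    by (simp add: pderiv_add pderiv_pCons)
  then show ?thesis ..
qed

context
  fixes N :: nat and \<tau> \<omega> :: "nat \<Rightarrow> real"
  assumes gauss_radau: "gauss_radau N \<tau> \<omega>"
begin

lemma gauss_radau_last_node: "\<tau> N = 1"
  using gauss_radau unfolding gauss_radau_def by blast

lemma gauss_radau_weight_pos: "1 \<le> i \<Longrightarrow> i \<le> N \<Longrightarrow> 0 < \<omega> i"
  using gauss_radau unfolding gauss_radau_def by blast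

lemma gauss_radau_exact:
  "degree p \<le> 2 * N - 2 \<Longrightarrow> integral {-1..1} (poly p) = (\<Sum>i = 1..N. \<omega> i * poly p (\<tau> i))"
  using gauss_radau unfolding gauss_radau_def by blast

lemma gauss_radau_nodes_less:
  assumes "1 \<le> i" "i < j" "j \<le> N"
  shows "\<tau> i < \<tau> j"
  using gauss_radau assms unfolding gauss_radau_def by blast

lemma gauss_radau_node_le_1: "1 \<le> i \<Longrightarrow> i \<le> N \<Longrightarrow> \<tau> i \<le> 1"
  using gauss_radau_nodes_less[of i N] gauss_radau_last_node by (cases "i = N") auto

lemma gauss_radau_first_node: "-1 < \<tau> 1"
  using gauss_radau unfolding gauss_radau_def by blast

lemma gauss_radau_node_gt_minus_1:
  assumes "1 \<le> i" "i \<le> N"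
  shows "-1 < \<tau> i"
proof (cases "i = 1")
  case False
  then have "\<tau> 1 < \<tau> i"
    using assms by (intro gauss_radau_nodes_less) auto
  then show ?thesis
    using gauss_radau_first_node by linarith
qed (use gauss_radau_first_node in simp)

lemma inj_on_gauss_radau_nodes: "inj_on \<tau> {1..N}"
proof (rule inj_onI)
  fix i j assume "i \<in> {1..N}" "j \<in> {1..N}" "\<tau> i = \<tau> j"
  then show "i = j"
    using gauss_radau_nodes_less[of i j] gauss_radau_nodes_less[of j i]
    by (cases i j rule: linorder_cases) auto
qed

lemma inj_on_ext_nodes: "inj_on (ext_nodes \<tau>) {0..N}"
proof (rule inj_onI)
  fix i j assume ij: "i \<in> {0..N}" "j \<in> {0..N}" and eq: "ext_nodes \<tau> i = ext_nodes \<tau> j"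
  show "i = j"
  proof (cases "i = 0 \<or> j = 0")
    case True
    then show ?thesis
      using eq ij gauss_radau_node_gt_minus_1[of i] gauss_radau_node_gt_minus_1[of j]
      by (auto simp: ext_nodes_def split: if_splits)
  next
    case False
    then show ?thesis
      using eq ij inj_on_gauss_radau_nodes by (auto simp: ext_nodes_def dest: inj_onD)
  qed
qed

lemma ext_lagrange_poly_at_nodes:
  assumes "1 \<le> i" "i \<le> N" "1 \<le> k" "k \<le> N"
  shows "poly (lagrange_poly (ext_nodes \<tau>) {0..N} i) (\<tau> k) = (if k = i then 1 else 0)"
  using lagrange_basis_at_node[OF _ inj_on_ext_nodes, of i k] assms
  by (simp add: poly_lagrange_poly ext_nodes_def)

lemma ext_lagrange_poly_at_minus_1:
  assumes "1 \<le> i" "i \<le> N"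
  shows "poly (lagrange_poly (ext_nodes \<tau>) {0..N} i) (-1) = 0"
  using lagrange_basis_at_node[OF _ inj_on_ext_nodes, of i 0] assms
  by (simp add: poly_lagrange_poly ext_nodes_def)

text \<open>Here \<open>L\<^sub>i W\<close> vanishes at \<open>-1 = \<tau>\<^sub>0\<close> and equals \<open>[i = N] W(1)\<close> at \<open>1 = \<tau>\<^sub>N\<close>.\<close>

lemma gauss_radau_summation_by_parts:
  assumes "1 \<le> i" "i \<le> N" "degree W \<le> N - 1"
  defines "L \<equiv> lagrange_poly (ext_nodes \<tau>) {0..N} i"
  shows "(\<Sum>k = 1..N. \<omega> k * poly (pderiv L) (\<tau> k) * poly W (\<tau> k))
       = (if i = N then poly W 1 else 0) - \<omega> i * poly (pderiv W) (\<tau> i)"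
proof -
  have "degree L \<le> N"
    using degree_lagrange_poly_le[of "{0..N}" "ext_nodes \<tau>" i] assms(2) by (simp add: L_def)
  then have "degree (L * W) \<le> N + (N - 1)"
    using degree_mult_le[of L W] assms(3) by linarith
  then have "degree (pderiv (L * W)) \<le> 2 * N - 2"
    by (simp add: degree_pderiv)
  then have "(\<Sum>k = 1..N. \<omega> k * poly (pderiv (L * W)) (\<tau> k)) = integral {-1..1} (poly (pderiv (L * W)))"
    by (simp add: gauss_radau_exact)
  also have "\<dots> = (if i = N then poly W 1 else 0)"
    using integral_poly_pderiv[of "-1" 1 "L * W"] assms(1,2) gauss_radau_last_node
      ext_lagrange_poly_at_nodes[of i N] ext_lagrange_poly_at_minus_1[of i]
    by (simp add: L_def)
  finally have integral_by_parts:
    "(\<Sum>k = 1..N. \<omega> k * poly (pderiv (L * W)) (\<tau> k)) = (if i = N then poly W 1 else 0)" .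
  have "(\<Sum>k = 1..N. \<omega> k * poly (pderiv (L * W)) (\<tau> k))
      = (\<Sum>k = 1..N. (if k = i then \<omega> k * poly (pderiv W) (\<tau> k) else 0))
      + (\<Sum>k = 1..N. \<omega> k * poly (pderiv L) (\<tau> k) * poly W (\<tau> k))"
    unfolding sum.distrib[symmetric] pderiv_mult
    by (rule sum.cong) (use ext_lagrange_poly_at_nodes[of i] assms(1,2) in \<open>auto simp: L_def algebra_simps\<close>)
  also have "(\<Sum>k = 1..N. (if k = i then \<omega> k * poly (pderiv W) (\<tau> k) else 0)) = \<omega> i * poly (pderiv W) (\<tau> i)"
    using assms(1,2) by simp
  finally show ?thesis
    using integral_by_parts by linarith
qed

lemma ddag_mat_times_poly_values:
  assumes "a < N" "degree W \<le> N - 1"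
  shows "(\<Sum>c<N. ddag_mat N \<tau> \<omega> $$ (a, c) * poly W (\<tau> (Suc c)))
       = poly (pderiv W) (\<tau> (Suc a)) - (if Suc a = N then poly W 1 / \<omega> N else 0)"
proof -
  define L where "L = lagrange_poly (ext_nodes \<tau>) {0..N} (Suc a)"
  have "0 < \<omega> (Suc a)"
    using gauss_radau_weight_pos assms(1) by simp
  have "(\<Sum>c<N. ddag_mat N \<tau> \<omega> $$ (a, c) * poly W (\<tau> (Suc c)))
      = - (\<Sum>c<N. \<omega> (Suc c) * poly (pderiv L) (\<tau> (Suc c)) * poly W (\<tau> (Suc c))) / \<omega> (Suc a)"
    unfolding sum_divide_distrib sum_negf[symmetric]
    by (rule sum.cong) (use assms(1) in \<open>auto simp: ddag_mat_def diff_mat_def deriv_lagrange_basis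
          L_def ext_nodes_def\<close>)
  also have "\<dots> = - (\<Sum>k = 1..N. \<omega> k * poly (pderiv L) (\<tau> k) * poly W (\<tau> k)) / \<omega> (Suc a)"
    by (simp only: sum_bounds_lt_plus1[of "\<lambda>k. \<omega> k * poly (pderiv L) (\<tau> k) * poly W (\<tau> k)"])
  also have "\<dots> = - ((if Suc a = N then poly W 1 else 0) - \<omega> (Suc a) * poly (pderiv W) (\<tau> (Suc a)))
                   / \<omega> (Suc a)"
    using gauss_radau_summation_by_parts[of "Suc a" W] assms by (simp add: L_def)
  also have "\<dots> = poly (pderiv W) (\<tau> (Suc a)) - (if Suc a = N then poly W 1 / \<omega> N else 0)"
    using \<open>0 < \<omega> (Suc a)\<close> by (auto simp: field_simps)
  finally show ?thesis .
qed

lemma E_mat_column_poly_values: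
  assumes "2 \<le> N" "b < N - 1"
  obtains W where "degree W \<le> N - 1" "pderiv W = lagrange_poly \<tau> {1..N-1} (Suc b)"
    "poly W 1 = \<omega> N * poly (lagrange_poly \<tau> {1..N-1} (Suc b)) 1"
    "\<And>c. c < N \<Longrightarrow> E_mat N \<tau> \<omega> $$ (c, b) = poly W (\<tau> (Suc c))"
proof -
  define M where "M = lagrange_poly \<tau> {1..N-1} (Suc b)"
  obtain W where W: "pderiv W = M" "poly W 1 = \<omega> N * poly M 1"
    using poly_antiderivative_exists by blast
  have "degree M \<le> N - 2"
    using degree_lagrange_poly_le[of "{1..N-1}" \<tau> "Suc b"] assms(2) by (simp add: M_def)
  then have "degree W - 1 \<le> N - 2"
    by (metis W(1) degree_pderiv)
  then have "degree W \<le> N - 1"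
    using assms(1) by linarith
  moreover have "E_mat N \<tau> \<omega> $$ (c, b) = poly W (\<tau> (Suc c))" if "c < N" for c
  proof (cases "c = N - 1")
    case True
    then have "\<tau> (Suc c) = 1"
      using gauss_radau_last_node assms(1) by (simp add: Suc_diff_1)
    then show ?thesis
      using True assms W(2) by (simp add: E_mat_def M_basis_def M_def poly_lagrange_poly)
  next
    case False
    have "integral {\<tau> (Suc c)..1} (M_basis N \<tau> (Suc b)) = poly W 1 - poly W (\<tau> (Suc c))"
      using integral_poly_pderiv[of "\<tau> (Suc c)" 1 W] gauss_radau_node_le_1[of "Suc c"] that W(1)
      by (simp add: M_basis_def lagrange_basis_eq_poly M_def)
    then show ?thesis
      using False that assms W(2) by (simp add: E_mat_def M_basis_def M_def poly_lagrange_poly)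
  qed
  ultimately show ?thesis
    using that W unfolding M_def by blast
qed

lemma ddag_mat_mult_E_mat:
  assumes "2 \<le> N"
  shows "ddag_mat N \<tau> \<omega> * E_mat N \<tau> \<omega> = 1\<^sub>m N"
proof (rule eq_matI)
  fix a b assume "a < dim_row (1\<^sub>m N :: real mat)" "b < dim_col (1\<^sub>m N :: real mat)"
  then have a: "a < N" and b: "b < N" by auto
  have product: "(ddag_mat N \<tau> \<omega> * E_mat N \<tau> \<omega>) $$ (a, b)
      = (\<Sum>c<N. ddag_mat N \<tau> \<omega> $$ (a, c) * E_mat N \<tau> \<omega> $$ (c, b))"
    using a b by (simp add: ddag_mat_def E_mat_def scalar_prod_def lessThan_atLeast0)
  have "(ddag_mat N \<tau> \<omega> * E_mat N \<tau> \<omega>) $$ (a, b) = (if a = b then 1 else 0)"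
  proof (cases "b = N - 1")
    case True
    then have "(ddag_mat N \<tau> \<omega> * E_mat N \<tau> \<omega>) $$ (a, b)
        = (\<Sum>c<N. ddag_mat N \<tau> \<omega> $$ (a, c) * poly [:- \<omega> N:] (\<tau> (Suc c)))"
      unfolding product by (intro sum.cong) (use True in \<open>auto simp: E_mat_def\<close>)
    also have "\<dots> = (if a = b then 1 else 0)"
      using ddag_mat_times_poly_values[OF a, of "[:- \<omega> N:]"] True a assms gauss_radau_weight_pos[of N]
      by auto
    finally show ?thesis .
  next
    case False
    then have "b < N - 1" using b by simp
    then obtain W where W: "degree W \<le> N - 1" "pderiv W = lagrange_poly \<tau> {1..N-1} (Suc b)"
      "poly W 1 = \<omega> N * poly (lagrange_poly \<tau> {1..N-1} (Suc b)) 1"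
      "\<And>c. c < N \<Longrightarrow> E_mat N \<tau> \<omega> $$ (c, b) = poly W (\<tau> (Suc c))"
      using E_mat_column_poly_values assms by blast
    have "(ddag_mat N \<tau> \<omega> * E_mat N \<tau> \<omega>) $$ (a, b)
        = (\<Sum>c<N. ddag_mat N \<tau> \<omega> $$ (a, c) * poly W (\<tau> (Suc c)))"
      unfolding product using W(4) by simp
    also have "\<dots> = lagrange_basis \<tau> {1..N-1} (Suc b) (\<tau> (Suc a))
        - (if Suc a = N then lagrange_basis \<tau> {1..N-1} (Suc b) 1 else 0)"
      using ddag_mat_times_poly_values[OF a W(1)] W(2,3) gauss_radau_weight_pos[of N] assms
      by (simp add: poly_lagrange_poly)
    also have "\<dots> = (if a = b then 1 else 0)"
    proof (cases "Suc a = N")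
      case True
      then show ?thesis
        using \<open>b < N - 1\<close> gauss_radau_last_node by auto
    next
      case False
      have "inj_on \<tau> {1..N-1}"
        using inj_on_gauss_radau_nodes by (rule inj_on_subset) auto
      then show ?thesis
        using lagrange_basis_at_node[of "{1..N-1}" \<tau> "Suc b" "Suc a"] False a \<open>b < N - 1\<close> by auto
    qed
    finally show ?thesis .
  qed
  then show "(ddag_mat N \<tau> \<omega> * E_mat N \<tau> \<omega>) $$ (a, b) = 1\<^sub>m N $$ (a, b)"
    using a b by simp
qed (auto simp: ddag_mat_def E_mat_def)

end

theorem proposition9p1:
  fixes N :: nat and \<tau> \<omega> :: "nat \<Rightarrow> real"
  assumes "N \<ge> 2" and "gauss_radau N \<tau> \<omega>"
  shows "invertible_mat (ddag_mat N \<tau> \<omega>) \<and> inverts_mat (ddag_mat N \<tau> \<omega>) (E_mat N \<tau> \<omega>) \<and> inverts_mat (E_mat N \<tau> \<omega>) (ddag_mat N \<tau> \<omega>)"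
proof -
  have D: "ddag_mat N \<tau> \<omega> \<in> carrier_mat N N" and E: "E_mat N \<tau> \<omega> \<in> carrier_mat N N"
    by (auto simp: ddag_mat_def E_mat_def)
  have DE: "ddag_mat N \<tau> \<omega> * E_mat N \<tau> \<omega> = 1\<^sub>m N"
    using ddag_mat_mult_E_mat assms by simp
  then have ED: "E_mat N \<tau> \<omega> * ddag_mat N \<tau> \<omega> = 1\<^sub>m N"
    by (rule mat_mult_left_right_inverse[OF D E])
  show ?thesis
    using DE ED D E unfolding invertible_mat_def inverts_mat_def by auto
qed

end
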